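(* Let $\mathcal{T}$ be a trie and let $p$ and $q$ be palindromes occurring in $\mathcal{T}$ (i.e. $p,q\in\mathsf{Substr}(\mathcal{T})$) such that $p$ is a proper prefix of $q$. If the locus of $p$ in $\mathsf{STree}(\mathcal{T})$ is an implicit node on an edge $(u,v)$ (with $v$ the child endpoint) and the character following it on that edge is $c$, then the locus of $q$ is an implicit node on some edge in the subtree of $\mathsf{STree}(\mathcal{T})$ rooted at $v$, and the character following it on its edge is also $c$.
   Context: A trie $\mathcal{T}$ is a rooted tree in which each edge is labeled by a single character and the out-going edges of each node have mutually distinct labels. Path labels are read leaf-to-root: for $\mathbf{u}$ a descendant of $\mathbf{v}$, $\mathsf{str}(\mathbf{u},\mathbf{v})$ is the string of edge labels on the path from $\mathbf{u}$ up to $\mathbf{v}$, and $\mathsf{Substr}(\mathcal{T})$ is the set of all such strings. By convention the root $\mathbf{r}$ of $\mathcal{T}$ has a single child, reached by an edge labeled by a special character $\$$ occurring nowhere else in $\mathcal{T}$. For each node $\mathbf{v}$ let $\mathsf{suf}(\mathbf{v})=\mathsf{str}(\mathbf{v},\mathbf{r})$. The suffix tree $\mathsf{STree}(\mathcal{T})$ is the compacted trie (edges labeled by non-empty strings, out-going edge labels of each node beginning with distinct characters, every internal node other than the root having at least two children) whose leaves are in one-to-one correspondence with the non-root nodes $\mathbf{v}$ of $\mathcal{T}$, the leaf for $\mathbf{v}$ spelling $\mathsf{suf}(\mathbf{v})$ from the root. The locus of a string $w\in\mathsf{Substr}(\mathcal{T})$ is the end point of the path spelling $w$ from the root of $\mathsf{STree}(\mathcal{T})$;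 it is an explicit node if it is a node of $\mathsf{STree}(\mathcal{T})$ and an implicit node if it lies strictly inside an edge. A palindrome is a string equal to its reversal. *)

theory Defs
  imports Main "HOL-Library.Sublist"
begin

text \<open>A trie is given by a node set N (nodes of type 'v), its root r, a parent
  function par (meaningful on non-root nodes), and lab v = the character labelling
  the edge from v to its parent.  The distinguished character d plays the role of the
  end marker.\<close>

definition trie :: "'v set \<Rightarrow> 'v \<Rightarrow> ('v \<Rightarrow> 'v) \<Rightarrow> ('v \<Rightarrow> 'a) \<Rightarrow> 'a \<Rightarrow> bool" where
  "trie N r par lab d \<longleftrightarrow>
     finite N \<and> r \<in> N \<and>
     (\<forall>v\<in>N - {r}. par v \<in> N) \<and>
     (\<forall>v\<in>N. \<exists>k. (par ^^ k) v = r) \<and>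
     (\<forall>v\<in>N - {r}. \<forall>w\<in>N - {r}. v \<noteq> w \<and> par v = par w \<longrightarrow> lab v \<noteq> lab w) \<and>
     card {v \<in> N - {r}. par v = r} = 1 \<and>
     (\<forall>v\<in>N - {r}. par v = r \<longrightarrow> lab v = d) \<and>
     (\<forall>v\<in>N - {r}. par v \<noteq> r \<longrightarrow> lab v \<noteq> d)"

definition depth :: "'v \<Rightarrow> ('v \<Rightarrow> 'v) \<Rightarrow> 'v \<Rightarrow> nat" where
  "depth r par v = (LEAST k. (par ^^ k) v = r)"

text \<open>suf v = str(v, r): edge labels read from v up to the root.\<close>
definition suf :: "'v \<Rightarrow> ('v \<Rightarrow> 'v) \<Rightarrow> ('v \<Rightarrow> 'a) \<Rightarrow> 'v \<Rightarrow> 'a list" where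
  "suf r par lab v = map (\<lambda>i. lab ((par ^^ i) v)) [0..<depth r par v]"

text \<open>str(u, par^k u) = take k (suf u); Substr(T) is the set of all such strings.\<close>
definition Substr :: "'v set \<Rightarrow> 'v \<Rightarrow> ('v \<Rightarrow> 'v) \<Rightarrow> ('v \<Rightarrow> 'a) \<Rightarrow> 'a list set" where
  "Substr N r par lab =
     {take k (suf r par lab u) | u k. u \<in> N \<and> k \<le> depth r par u}"

text \<open>Explicit nodes of STree(T), identified with the strings they spell from the root:
  the root, the leaves suf(v) for non-root nodes v of T, and the branching nodes.\<close>
definition STnodes :: "'v set \<Rightarrow> 'v \<Rightarrow> ('v \<Rightarrow> 'v) \<Rightarrow> ('v \<Rightarrow> 'a) \<Rightarrow> 'a list set" where
  "STnodes N r par lab =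
     {[]} \<union> suf r par lab ` (N - {r}) \<union>
     {w. \<exists>a b. a \<noteq> b \<and> w @ [a] \<in> Substr N r par lab \<and> w @ [b] \<in> Substr N r par lab}"

definition STedge :: "'v set \<Rightarrow> 'v \<Rightarrow> ('v \<Rightarrow> 'v) \<Rightarrow> ('v \<Rightarrow> 'a) \<Rightarrow> 'a list \<Rightarrow> 'a list \<Rightarrow> bool" where
  "STedge N r par lab x y \<longleftrightarrow>
     x \<in> STnodes N r par lab \<and> y \<in> STnodes N r par lab \<and> strict_prefix x y \<and>
     (\<forall>z \<in> STnodes N r par lab. \<not> (strict_prefix x z \<and> strict_prefix z y))"

definition implicit_on_edge :: "'v set \<Rightarrow> 'v \<Rightarrow> ('v \<Rightarrow> 'v) \<Rightarrow> ('v \<Rightarrow> 'a) \<Rightarrow>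
    'a list \<Rightarrow> 'a list \<Rightarrow> 'a list \<Rightarrow> bool" where
  "implicit_on_edge N r par lab w x y \<longleftrightarrow>
     STedge N r par lab x y \<and> strict_prefix x w \<and> strict_prefix w y"

definition palindrome :: "'a list \<Rightarrow> bool" where
  "palindrome w \<longleftrightarrow> rev w = w"

end

theory Submission
  imports Defs
begin

text \<open>Since \<open>p\<close> and \<open>q\<close> are palindromes and \<open>p\<close> is a prefix of \<open>q\<close>, it is also a
  suffix of \<open>q\<close>: a border lying strictly inside the edge \<open>(u, v)\<close>. An implicit node has
  a unique one-character extension, so every extension of \<open>q\<close> restricts to the extension
  \<open>c\<close> of its border; in particular \<open>q\<close> is not a branching node. Nor is it a leaf, since
  the end marker ending a leaf would reappear at the end of the border, whereas in a
  substring the end marker can only be the last character. So \<open>q\<close> is implicit, and the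
  first character below it is \<open>c\<close>. Finally, if \<open>v\<close> were longer than \<open>q = s p\<close>, then
  \<open>v = s p t\<close> would have the border \<open>p t\<close>, again inside \<open>(u, v)\<close>, and by the same
  argument \<open>v\<close> could not be a node; hence \<open>v\<close> is a proper prefix of \<open>q\<close> and the edge
  of \<open>q\<close> starts at or below \<open>v\<close>.\<close>

lemma funpow_less_depth_neq_root: "i < depth r par v \<Longrightarrow> (par ^^ i) v \<noteq> r"
  unfolding depth_def by (rule not_less_Least)

lemma length_suf [simp]: "length (suf r par lab v) = depth r par v"
  by (simp add: suf_def)

lemma nth_suf: "i < depth r par v \<Longrightarrow> suf r par lab v ! i = lab ((par ^^ i) v)"
  by (simp add: suf_def)

lemma palindrome_strict_prefix_imp_strict_suffix:
  assumes "palindrome p" and "palindrome q" and "strict_prefix p q"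
  shows "strict_suffix p q"
  using assms by (simp add: palindrome_def strict_suffix_to_prefix)

locale trie_setting =
  fixes N :: "'v set" and r :: 'v and par :: "'v \<Rightarrow> 'v" and lab :: "'v \<Rightarrow> 'a" and d :: 'a
  assumes trie: "trie N r par lab d"
begin

lemma root_in_nodes: "r \<in> N"
  using trie unfolding trie_def by blast

lemma parent_in_nodes: "v \<in> N \<Longrightarrow> v \<noteq> r \<Longrightarrow> par v \<in> N"
  using trie unfolding trie_def by blast

lemma lab_eq_end_marker_iff: "v \<in> N \<Longrightarrow> v \<noteq> r \<Longrightarrow> lab v = d \<longleftrightarrow> par v = r"
  using trie unfolding trie_def by blast

lemma funpow_depth_eq_root: "v \<in> N \<Longrightarrow> (par ^^ depth r par v) v = r"
  using trie unfolding depth_def trie_def by (metis (mono_tags, lifting) LeastI_ex)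

lemma funpow_in_nodes: "v \<in> N \<Longrightarrow> j \<le> depth r par v \<Longrightarrow> (par ^^ j) v \<in> N"
proof (induction j)
  case (Suc j)
  then have "(par ^^ j) v \<in> N" and "(par ^^ j) v \<noteq> r"
    using funpow_less_depth_neq_root[of j r par v] by (auto simp: Suc_le_eq)
  then show ?case
    by (simp add: parent_in_nodes)
qed simp

lemma depth_funpow:
  assumes "v \<in> N" and "j \<le> depth r par v"
  shows "depth r par ((par ^^ j) v) = depth r par v - j"
  unfolding depth_def[of r par "(par ^^ j) v"]
proof (rule Least_equality)
  show "(par ^^ (depth r par v - j)) ((par ^^ j) v) = r"
    using assms funpow_depth_eq_root by (metis comp_apply funpow_add le_add_diff_inverse2)
next
  fix k assume "(par ^^ k) ((par ^^ j) v) = r"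
  then have "(par ^^ (k + j)) v = r" by (simp add: funpow_add)
  then show "depth r par v - j \<le> k"
    using funpow_less_depth_neq_root[of "k + j" r par v] by linarith
qed

lemma drop_suf:
  assumes "v \<in> N" and "j \<le> depth r par v"
  shows "drop j (suf r par lab v) = suf r par lab ((par ^^ j) v)"
  using assms
  by (intro nth_equalityI) (simp_all add: depth_funpow nth_suf, metis add.commute comp_apply funpow_add)

lemma Substr_prefix_closed:
  assumes "w \<in> Substr N r par lab" and "prefix w' w"
  shows "w' \<in> Substr N r par lab"
proof -
  obtain u k where u: "u \<in> N" "k \<le> depth r par u" "w = take k (suf r par lab u)"
    using assms(1) unfolding Substr_def by auto
  have "w' = take (length w') w"
    using assms(2) by (auto simp: prefix_def)
  then have "w' = take (min (length w') k) (suf r par lab u)"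
    using u(3) by simp
  with u show ?thesis
    unfolding Substr_def by (metis (mono_tags, lifting) mem_Collect_eq min.coboundedI2)
qed

lemma Substr_suffix_closed:
  assumes "w \<in> Substr N r par lab" and "suffix w' w"
  shows "w' \<in> Substr N r par lab"
proof -
  obtain u k where u: "u \<in> N" "k \<le> depth r par u" "w = take k (suf r par lab u)"
    using assms(1) unfolding Substr_def by auto
  define j where "j = length w - length w'"
  have w': "w' = drop j w"
    using assms(2) unfolding j_def suffix_def by auto
  have "j \<le> k"
    using u unfolding j_def by simp
  then have "w' = take (k - j) (suf r par lab ((par ^^ j) u))"
    using u w' by (simp add: drop_take drop_suf)
  moreover have "(par ^^ j) u \<in> N" and "k - j \<le> depth r par ((par ^^ j) u)"
    using u \<open>j \<le> k\<close> by (simp_all add: funpow_in_nodes depth_funpow)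
  ultimately show ?thesis
    unfolding Substr_def by blast
qed

lemma Substr_nth_neq_end_marker:
  assumes "w \<in> Substr N r par lab" and "Suc i < length w"
  shows "w ! i \<noteq> d"
proof -
  obtain u k where u: "u \<in> N" "k \<le> depth r par u" "w = take k (suf r par lab u)"
    using assms(1) unfolding Substr_def by auto
  have i: "Suc i < k" "Suc i < depth r par u"
    using u assms(2) by simp_all
  have "w ! i = lab ((par ^^ i) u)"
    using u i by (simp add: nth_suf)
  moreover have "(par ^^ i) u \<in> N" and "(par ^^ i) u \<noteq> r" and "par ((par ^^ i) u) \<noteq> r"
    using funpow_in_nodes[OF u(1)] i(2) funpow_less_depth_neq_root[of i r par u]
      funpow_less_depth_neq_root[of "Suc i" r par u] by auto
  ultimately show ?thesis
    using lab_eq_end_marker_iff by simp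
qed

lemma last_suf_eq_end_marker:
  assumes "u \<in> N" and "u \<noteq> r"
  shows "last (suf r par lab u) = d"
proof -
  have pos: "depth r par u > 0"
    using funpow_depth_eq_root[OF assms(1)] assms(2) by (metis funpow_0 gr0I)
  define x where "x = (par ^^ (depth r par u - 1)) u"
  have "x \<in> N" and "x \<noteq> r"
    using funpow_in_nodes[OF assms(1)] funpow_less_depth_neq_root[of _ r par u] pos
    unfolding x_def by auto
  moreover have "par x = r"
    using funpow_depth_eq_root[OF assms(1)] pos unfolding x_def
    by (metis Suc_diff_1 comp_apply funpow.simps(2))
  ultimately have "lab x = d"
    using lab_eq_end_marker_iff by simp
  moreover have "suf r par lab u \<noteq> []"
    using pos by (metis length_greater_0_conv length_suf)
  then have "last (suf r par lab u) = lab x"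
    using pos by (simp add: last_conv_nth nth_suf x_def)
  ultimately show ?thesis
    by simp
qed

lemma Substr_prefix_of_STnode:
  assumes "w \<in> Substr N r par lab"
  obtains y where "y \<in> STnodes N r par lab" and "prefix w y"
proof -
  obtain u k where u: "u \<in> N" "k \<le> depth r par u" "w = take k (suf r par lab u)"
    using assms unfolding Substr_def by auto
  show ?thesis
  proof (cases "u = r")
    case True
    then have "w = []"
      using u unfolding depth_def by simp
    then show ?thesis
      using that[of "[]"] unfolding STnodes_def by simp
  next
    case False
    then show ?thesis
      using that[of "suf r par lab u"] u unfolding STnodes_def by (simp add: take_is_prefix)
  qed
qed

lemma STnodes_subset_Substr: "STnodes N r par lab \<subseteq> Substr N r par lab"
proof
  fix w assume "w \<in> STnodes N r par lab"
  then consider "w = []" | u where "u \<in> N" "w = suf r par lab u"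
    | a where "w @ [a] \<in> Substr N r par lab"
    unfolding STnodes_def by auto
  then show "w \<in> Substr N r par lab"
  proof cases
    case 1
    then show ?thesis
      using root_in_nodes unfolding Substr_def by force
  next
    case (2 u)
    then have "w = take (depth r par u) (suf r par lab u)"
      by simp
    then show ?thesis
      using 2 unfolding Substr_def by blast
  next
    case (3 a)
    then show ?thesis
      by (auto intro: Substr_prefix_closed)
  qed
qed

lemma STnode_nonempty_cases:
  assumes "w \<in> STnodes N r par lab" and "w \<noteq> []"
  obtains "last w = d"
    | a b where "a \<noteq> b" "w @ [a] \<in> Substr N r par lab" "w @ [b] \<in> Substr N r par lab"
  using assms last_suf_eq_end_marker unfolding STnodes_def by blast

lemma implicit_on_edge_snoc_prefix:
  assumes "implicit_on_edge N r par lab z x y" and "z @ [a] \<in> Substr N r par lab"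
  shows "prefix (z @ [a]) y"
proof -
  have edge: "STedge N r par lab x y" "strict_prefix x z" "strict_prefix z y"
    using assms(1) unfolding implicit_on_edge_def by auto
  then have "z \<notin> STnodes N r par lab" and "y \<in> Substr N r par lab"
    using STnodes_subset_Substr unfolding STedge_def by blast+
  have zy: "prefix (z @ [y ! length z]) y"
    using edge(3) by (simp add: append_one_prefix prefix_length_less strict_prefix_def)
  then have "z @ [y ! length z] \<in> Substr N r par lab"
    using \<open>y \<in> Substr N r par lab\<close> Substr_prefix_closed by blast
  then have "a = y ! length z"
    using assms(2) \<open>z \<notin> STnodes N r par lab\<close> unfolding STnodes_def by blast
  with zy show ?thesis
    by simp
qed

lemma implicit_on_edge_extension_prefix:
  assumes "implicit_on_edge N r par lab z x y"
    and "w \<in> Substr N r par lab" and "prefix z w" and "length w \<le> length y"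
  shows "prefix w y"
  using assms(2-4)
proof (induction w rule: rev_induct)
  case (snoc a w)
  show ?case
  proof (cases "z = w @ [a]")
    case True
    then show ?thesis
      using assms(1) unfolding implicit_on_edge_def strict_prefix_def by simp
  next
    case False
    then have "prefix z w"
      using snoc.prems(2) by simp
    moreover have "w \<in> Substr N r par lab"
      using snoc.prems(1) by (rule Substr_prefix_closed) simp
    ultimately have "prefix w y"
      using snoc.IH snoc.prems(3) by simp
    then have "strict_prefix w y"
      using snoc.prems(3) by (auto simp: strict_prefix_def)
    moreover have "strict_prefix x w"
      using assms(1) \<open>prefix z w\<close> unfolding implicit_on_edge_def
      by (meson prefix_order.less_le_trans)
    ultimately have "implicit_on_edge N r par lab w x y"
      using assms(1) unfolding implicit_on_edge_def by simp
    then show ?thesis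
      using snoc.prems(1) by (rule implicit_on_edge_snoc_prefix)
  qed
qed simp

lemma implicit_border_imp_not_STnode:
  assumes "implicit_on_edge N r par lab z x y" and "prefix z w" and "strict_suffix z w"
  shows "w \<notin> STnodes N r par lab"
proof
  assume w: "w \<in> STnodes N r par lab"
  have "z \<noteq> []"
    using assms(1) unfolding implicit_on_edge_def by auto
  have "length z < length w"
    using assms(3) by (rule suffix_length_less)
  then have "w \<noteq> []"
    by auto
  with w show False
  proof (cases rule: STnode_nonempty_cases)
    case 1
    have "w ! (length z - 1) = last z"
      using assms(2) \<open>z \<noteq> []\<close> by (auto simp: prefix_def last_conv_nth nth_append)
    also have "\<dots> = last w"
      using assms(3) \<open>z \<noteq> []\<close> by (auto simp: strict_suffix_def suffix_def)
    finally have "w ! (length z - 1) = d"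
      using 1 by simp
    moreover have "Suc (length z - 1) < length w"
      using \<open>length z < length w\<close> \<open>z \<noteq> []\<close> by simp
    ultimately show False
      using Substr_nth_neq_end_marker w STnodes_subset_Substr by blast
  next
    case (2 a b)
    have "z @ [a] \<in> Substr N r par lab" and "z @ [b] \<in> Substr N r par lab"
      using 2 assms(3) Substr_suffix_closed by (auto simp: strict_suffix_def)
    then have "prefix (z @ [a]) y" and "prefix (z @ [b]) y"
      using assms(1) implicit_on_edge_snoc_prefix by blast+
    then have "a = b"
      by (auto simp: prefix_def)
    with 2 show False
      by simp
  qed
qed

lemma implicit_border_edge_end_length_le:
  assumes "implicit_on_edge N r par lab p x y"
    and "q \<in> Substr N r par lab" and "prefix p q" and "strict_suffix p q"
  shows "length y \<le> length q"
proof (rule ccontr)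
  assume "\<not> length y \<le> length q"
  then have "length q < length y"
    by simp
  then have "prefix q y"
    using implicit_on_edge_extension_prefix assms by simp
  then obtain t where t: "y = q @ t"
    by (auto simp: prefix_def)
  define b where "b = drop (length q - length p) y"
  have b: "b = p @ t"
    using assms(4) unfolding b_def t by (auto simp: strict_suffix_def suffix_def)
  have "y \<in> STnodes N r par lab" and "strict_prefix x p"
    using assms(1) unfolding implicit_on_edge_def STedge_def by auto
  have "suffix b y"
    unfolding b_def by (rule suffix_drop)
  then have "b \<in> Substr N r par lab"
    using \<open>y \<in> STnodes N r par lab\<close> STnodes_subset_Substr Substr_suffix_closed by blast
  moreover have "length b < length y"
    using suffix_length_less[OF assms(4)] \<open>length q < length y\<close> unfolding b_def by simp
  ultimately have "prefix b y"
    using implicit_on_edge_extension_prefix[OF assms(1)] b by simp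
  have "strict_prefix x b"
    using \<open>strict_prefix x p\<close> b by (auto intro: prefix_order.less_le_trans)
  with \<open>prefix b y\<close> \<open>length b < length y\<close> have "implicit_on_edge N r par lab b x y"
    using assms(1) unfolding implicit_on_edge_def by (auto simp: strict_prefix_def)
  moreover have "strict_suffix b y"
    using \<open>suffix b y\<close> \<open>length b < length y\<close> by (auto simp: strict_suffix_def)
  ultimately show False
    using \<open>prefix b y\<close> \<open>y \<in> STnodes N r par lab\<close> implicit_border_imp_not_STnode by blast
qed

lemma implicit_border_edge_end_strict_prefix:
  assumes "implicit_on_edge N r par lab p x y"
    and "q \<in> Substr N r par lab" and "prefix p q" and "strict_suffix p q"
  shows "strict_prefix y q"
proof -
  define t where "t = take (length y) q"
  have "length y \<le> length q"
    using assms by (rule implicit_border_edge_end_length_le)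
  then have len_t: "length t = length y"
    unfolding t_def by simp
  have "length p < length y"
    using assms(1) unfolding implicit_on_edge_def by (simp add: prefix_length_less)
  then have "prefix p t"
    using assms(3) unfolding t_def by (auto simp: prefix_def)
  moreover have "t \<in> Substr N r par lab"
    using assms(2) take_is_prefix Substr_prefix_closed unfolding t_def by blast
  ultimately have "prefix t y"
    using implicit_on_edge_extension_prefix[OF assms(1)] len_t by simp
  then have "t = y"
    using len_t by (auto simp: prefix_def)
  then have "prefix y q"
    unfolding t_def by (metis take_is_prefix)
  moreover have "y \<in> STnodes N r par lab" and "q \<notin> STnodes N r par lab"
    using assms(1) implicit_border_imp_not_STnode[OF assms(1,3,4)]
    unfolding implicit_on_edge_def STedge_def by auto
  ultimately show ?thesis
    by (auto simp: strict_prefix_def)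
qed

lemma implicit_on_edge_exists:
  assumes "w \<in> Substr N r par lab" and "w \<notin> STnodes N r par lab"
  shows "\<exists>x y. implicit_on_edge N r par lab w x y"
proof -
  define X where "X = {x \<in> STnodes N r par lab. strict_prefix x w}"
  define Y where "Y = {y \<in> STnodes N r par lab. strict_prefix w y}"
  have "[] \<in> STnodes N r par lab"
    unfolding STnodes_def by simp
  then have "[] \<in> X"
    using assms(2) unfolding X_def by (auto simp: strict_prefix_def)
  moreover have "\<forall>z. z \<in> X \<longrightarrow> length z < Suc (length w)"
    unfolding X_def by (auto dest: prefix_length_less)
  ultimately obtain x where x: "x \<in> X" and x_max: "\<And>z. z \<in> X \<Longrightarrow> length z \<le> length x"
    using ex_has_greatest_nat[of "\<lambda>z. z \<in> X"] by blast
  obtain y0 where "y0 \<in> STnodes N r par lab" and "prefix w y0"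
    using assms(1) by (rule Substr_prefix_of_STnode)
  then have "y0 \<in> Y"
    using assms(2) unfolding Y_def by (auto simp: strict_prefix_def)
  then obtain y where y: "y \<in> Y" and y_min: "\<And>z. z \<in> Y \<Longrightarrow> length y \<le> length z"
    using ex_has_least_nat[of "\<lambda>z. z \<in> Y" y0 length] by blast
  have no_node_between: "\<not> (strict_prefix x z \<and> strict_prefix z y)"
    if z: "z \<in> STnodes N r par lab" for z
  proof
    assume xzy: "strict_prefix x z \<and> strict_prefix z y"
    have "z \<noteq> w"
      using z assms(2) by auto
    moreover have "prefix z w \<or> prefix w z"
      using xzy y prefix_same_cases unfolding Y_def strict_prefix_def by blast
    ultimately consider "z \<in> X" | "z \<in> Y"
      using z unfolding X_def Y_def by (auto simp: strict_prefix_def)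
    then show False
    proof cases
      case 1
      then show False
        using x_max[of z] prefix_length_less[of x z] xzy by simp
    next
      case 2
      then show False
        using y_min[of z] prefix_length_less[of z y] xzy by simp
    qed
  qed
  have xw: "strict_prefix x w" and wy: "strict_prefix w y"
    and "x \<in> STnodes N r par lab" and "y \<in> STnodes N r par lab"
    using x y unfolding X_def Y_def by simp_all
  with no_node_between have "implicit_on_edge N r par lab w x y"
    using prefix_order.less_trans[OF xw wy] unfolding implicit_on_edge_def STedge_def by simp
  then show ?thesis
    by blast
qed

lemma implicit_on_edge_start_maximal:
  assumes "implicit_on_edge N r par lab w x y"
    and "z \<in> STnodes N r par lab" and "strict_prefix z w"
  shows "prefix z x"
proof (rule ccontr)
  assume "\<not> prefix z x"
  moreover have "prefix x w"
    using assms(1) unfolding implicit_on_edge_def strict_prefix_def by simp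
  ultimately have "strict_prefix x z"
    using assms(3) prefix_same_cases unfolding strict_prefix_def by blast
  moreover have "strict_prefix z y"
    using assms(1,3) unfolding implicit_on_edge_def by (meson prefix_order.less_trans)
  ultimately show False
    using assms(1,2) unfolding implicit_on_edge_def STedge_def by blast
qed

lemma implicit_border_extension_nth:
  assumes "implicit_on_edge N r par lab p x y" and "suffix p q"
    and "w \<in> Substr N r par lab" and "strict_prefix q w"
  shows "w ! length q = y ! length p"
proof -
  have "prefix (q @ [w ! length q]) w"
    using assms(4) by (simp add: append_one_prefix prefix_length_less strict_prefix_def)
  then have "q @ [w ! length q] \<in> Substr N r par lab"
    using assms(3) Substr_prefix_closed by blast
  moreover have "suffix (p @ [w ! length q]) (q @ [w ! length q])"
    using assms(2) by simp
  ultimately have "p @ [w ! length q] \<in> Substr N r par lab"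
    using Substr_suffix_closed by blast
  with assms(1) have "prefix (p @ [w ! length q]) y"
    by (rule implicit_on_edge_snoc_prefix)
  then show ?thesis
    by (auto simp: prefix_def nth_append)
qed

end

theorem lemma3:
  fixes N :: "'v set" and r :: 'v and par :: "'v \<Rightarrow> 'v" and lab :: "'v \<Rightarrow> 'a"
    and d :: 'a and p q u v :: "'a list" and c :: 'a
  assumes "trie N r par lab d"
    and "p \<in> Substr N r par lab" and "q \<in> Substr N r par lab"
    and "palindrome p" and "palindrome q"
    and "strict_prefix p q"
    and "implicit_on_edge N r par lab p u v"
    and "c = v ! length p"
  shows "\<exists>x y. implicit_on_edge N r par lab q x y \<and> prefix v x \<and> y ! length q = c"
proof -
  interpret trie_setting N r par lab d
    using assms(1) by unfold_locales
  have border: "prefix p q" "strict_suffix p q"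
    using assms(4-6) palindrome_strict_prefix_imp_strict_suffix by (auto simp: strict_prefix_def)
  have "q \<notin> STnodes N r par lab"
    using assms(7) border by (rule implicit_border_imp_not_STnode)
  then obtain x y where edge: "implicit_on_edge N r par lab q x y"
    using assms(3) implicit_on_edge_exists by blast
  have "strict_prefix v q" and "v \<in> STnodes N r par lab"
    using implicit_border_edge_end_strict_prefix[OF assms(7,3) border] assms(7)
    unfolding implicit_on_edge_def STedge_def by auto
  then have "prefix v x"
    using edge implicit_on_edge_start_maximal by blast
  have "y \<in> Substr N r par lab" and "strict_prefix q y"
    using edge STnodes_subset_Substr unfolding implicit_on_edge_def STedge_def by auto
  then have "y ! length q = c"
    using implicit_border_extension_nth[OF assms(7)] border(2) assms(8)
    unfolding strict_suffix_def by simp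
  with edge \<open>prefix v x\<close> show ?thesis
    by blast
qed

end
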